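(* Let $\mathcal{P}$ be a poset (not necessarily finite) of composition length at least $2$ whose Hasse diagram is a rooted tree with root $r$, and let $M$ be a $k\mathcal{P}$-module such that $\partial_0^*M\cong\partial_1^*M$ as $k\mathcal{G}^{\mathcal{P}}_1$-modules. Then: (1) for any $a\ne r$ and any $x,y>a$ in $\mathcal{P}$, $\ker M(a<x)=\ker M(a<y)$; (2) if $a<b$ and $c<d$ lie in the same line-component of $\mathcal{P}$ and $a,c\neq r$, then $\ker M(a<b)\cong\ker M(c<d)$; (3) if moreover $r$ has a unique successor $s$, then $\ker M(r<s)=\ker M(r<s')$ for every $s'>s$ that is not maximal in $\mathcal{P}$.
   Context: A poset is viewed as a category with a unique morphism $x\to y$ (written $x<y$ or $x\le y$) iff $x\le y$. A $k\mathcal{P}$-module is a functor to finite-dimensional $k$-vector spaces ($k$ a field). The composition length is the maximal length of a chain of covering relations $x_0\lessdot x_1\lessdot\cdots\lessdot x_m$. The Hasse diagram is a rooted tree with root $r$ means: $r$ is the unique minimal element and every $x\ne r$ has exactly one lower cover. A successor of $x$ is an upper cover of $x$. $\mathcal{G}^{\mathcal{P}}_1$ is the poset whose elements are the strict relations $a<b$ of $\mathcal{P}$ (written $[a<b]$), with $[a<b]\le[c<d]$ iff $[a<b]=[c<d]$ or $b\le c$; $\partial_0[a<b]=b$, $\partial_1[a<b]=a$, and $F^*M=M\circ F$. A set of strict relations is a line-component if it is the set of elements of a connected component of $\mathcal{G}^{\mathcal{P}}_1$. *)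

theory Defs
  imports Complex_Main
begin

(* Poset: a type of class order (the poset is UNIV).  k: a type of class field.
   A kP-module is given by a family of subspaces V x of an ambient k-vector space
   (ambient type 'v with scalar multiplication sc), together with linear maps
   F x y : V x -> V y for x <= y, satisfying functoriality. *)

definition covers :: "'p::order \<Rightarrow> 'p \<Rightarrow> bool" where
  "covers x y \<longleftrightarrow> x < y \<and> \<not> (\<exists>z. x < z \<and> z < y)"

definition comp_length_ge2 :: "'p::order itself \<Rightarrow> bool" where
  "comp_length_ge2 _ \<longleftrightarrow> (\<exists>x0 x1 x2 :: 'p. covers x0 x1 \<and> covers x1 x2)"

definition hasse_rooted_tree :: "'p::order \<Rightarrow> bool" where
  "hasse_rooted_tree r \<longleftrightarrow>
     (\<forall>x. (\<not> (\<exists>y. y < x)) \<longleftrightarrow> x = r) \<and>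
     (\<forall>x. x \<noteq> r \<longrightarrow> (\<exists>!y. covers y x))"

definition lin_map_on :: "('k::field \<Rightarrow> 'v::ab_group_add \<Rightarrow> 'v) \<Rightarrow> 'v set \<Rightarrow> 'v set \<Rightarrow> ('v \<Rightarrow> 'v) \<Rightarrow> bool" where
  "lin_map_on sc A B f \<longleftrightarrow> f ` A \<subseteq> B \<and>
     (\<forall>u\<in>A. \<forall>v\<in>A. f (u + v) = f u + f v) \<and>
     (\<forall>c. \<forall>u\<in>A. f (sc c u) = sc c (f u))"

definition lin_iso :: "('k::field \<Rightarrow> 'v::ab_group_add \<Rightarrow> 'v) \<Rightarrow> 'v set \<Rightarrow> 'v set \<Rightarrow> bool" where
  "lin_iso sc A B \<longleftrightarrow> (\<exists>g. lin_map_on sc A B g \<and> bij_betw g A B)"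

definition kP_module :: "('k::field \<Rightarrow> 'v::ab_group_add \<Rightarrow> 'v) \<Rightarrow> ('p::order \<Rightarrow> 'v set) \<Rightarrow> ('p \<Rightarrow> 'p \<Rightarrow> 'v \<Rightarrow> 'v) \<Rightarrow> bool" where
  "kP_module sc V F \<longleftrightarrow> vector_space sc \<and>
     (\<forall>x. module.subspace sc (V x) \<and> (\<exists>B. finite B \<and> B \<subseteq> V x \<and> module.span sc B = V x)) \<and>
     (\<forall>x y. x \<le> y \<longrightarrow> lin_map_on sc (V x) (V y) (F x y)) \<and>
     (\<forall>x. \<forall>v\<in>V x. F x x v = v) \<and>
     (\<forall>x y z. x \<le> y \<longrightarrow> y \<le> z \<longrightarrow> (\<forall>v\<in>V x. F y z (F x y v) = F x z v))"

definition kerM :: "('p::order \<Rightarrow> 'v::zero set) \<Rightarrow> ('p \<Rightarrow> 'p \<Rightarrow> 'v \<Rightarrow> 'v) \<Rightarrow> 'p \<Rightarrow> 'p \<Rightarrow> 'v set" where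
  "kerM V F x y = {v \<in> V x. F x y v = 0}"

(* partial_0^* M \<cong> partial_1^* M as kG_1-modules: a natural isomorphism phi
   with components phi_[a<b] : M(b) -> M(a), natural w.r.t. every morphism
   [a<b] <= [c<d] (i.e. b <= c) of G_1; identities are automatic. *)
definition pullback_iso :: "('k::field \<Rightarrow> 'v::ab_group_add \<Rightarrow> 'v) \<Rightarrow> ('p::order \<Rightarrow> 'v set) \<Rightarrow> ('p \<Rightarrow> 'p \<Rightarrow> 'v \<Rightarrow> 'v) \<Rightarrow> bool" where
  "pullback_iso sc V F \<longleftrightarrow> (\<exists>\<phi> :: 'p \<Rightarrow> 'p \<Rightarrow> 'v \<Rightarrow> 'v.
     (\<forall>a b. a < b \<longrightarrow> lin_map_on sc (V b) (V a) (\<phi> a b) \<and> bij_betw (\<phi> a b) (V b) (V a)) \<and>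
     (\<forall>a b c d. a < b \<longrightarrow> c < d \<longrightarrow> b \<le> c \<longrightarrow>
        (\<forall>v\<in>V b. \<phi> c d (F b d v) = F a c (\<phi> a b v))))"

(* comparability (= adjacency) of two distinct elements of G_1 *)
definition g1_adj :: "'p::order \<times> 'p \<Rightarrow> 'p \<times> 'p \<Rightarrow> bool" where
  "g1_adj p q \<longleftrightarrow> fst p < snd p \<and> fst q < snd q \<and> p \<noteq> q \<and>
     (snd p \<le> fst q \<or> snd q \<le> fst p)"

definition same_line_component :: "'p::order \<Rightarrow> 'p \<Rightarrow> 'p \<Rightarrow> 'p \<Rightarrow> bool" where
  "same_line_component a b c d \<longleftrightarrow> a < b \<and> c < d \<and> g1_adj\<^sup>*\<^sup>* (a, b) (c, d)"

end

theory Submission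
  imports Defs
begin

(* The natural isomorphism \<phi> between the two pullbacks of M transports kernels: naturality at
   [e<p] \<le> [c<q] reads \<phi>[c<q] \<circ> M(p<q) = M(e<c) \<circ> \<phi>[e<p], and \<phi>[c<q] is injective, so
   \<phi>[e<p] maps ker M(p<q) onto ker M(e<c) whenever e < p \<le> c < q.  With c = p this shows that
   ker M(p<q) does not depend on q once p is not minimal, which is (1); with e = r and p = s it
   shows that ker M(r<c) is the same for every non-maximal c \<ge> s, which is (3).  Consequently
   ker M(u<q) \<cong> ker M(e<w) for every non-minimal e \<le> u, and an induction along a path in G_1
   gives (2). *)

lemma lin_map_on_zero:
  assumes "lin_map_on sc A B f" and "0 \<in> A"
  shows "f 0 = 0"
proof -
  have "f (0 + 0) = f 0 + f 0" using assms unfolding lin_map_on_def by blast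
  then show ?thesis by simp
qed

lemma lin_iso_refl: "lin_iso sc A A"
  unfolding lin_iso_def lin_map_on_def by (rule exI[of _ id]) auto

lemma lin_iso_trans:
  assumes "lin_iso sc A B" and "lin_iso sc B C"
  shows "lin_iso sc A C"
proof -
  obtain g h where g: "lin_map_on sc A B g" "bij_betw g A B"
    and h: "lin_map_on sc B C h" "bij_betw h B C"
    using assms unfolding lin_iso_def by blast
  have "lin_map_on sc A C (h \<circ> g)"
    using g(1) h(1) unfolding lin_map_on_def by (auto simp: image_subset_iff)
  moreover have "bij_betw (h \<circ> g) A C" using g(2) h(2) by (rule bij_betw_trans)
  ultimately show ?thesis unfolding lin_iso_def by blast
qed

lemma lin_iso_sym:
  assumes "module sc" and "module.subspace sc A" and "lin_iso sc A B"
  shows "lin_iso sc B A"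
proof -
  obtain g where g: "lin_map_on sc A B g" "bij_betw g A B"
    using assms(3) unfolding lin_iso_def by blast
  have add: "u + v \<in> A" and scale: "sc c u \<in> A" if "u \<in> A" "v \<in> A" for u v c
    using assms(2) that by (simp_all add: module.subspace_def[OF assms(1)])
  define h where "h = inv_into A g"
  have h: "bij_betw h B A" unfolding h_def using g(2) by (rule bij_betw_inv_into)
  have hA: "h u \<in> A" if "u \<in> B" for u using bij_betwE[OF h] that by blast
  have gh: "g (h u) = u" if "u \<in> B" for u
    unfolding h_def using g(2) that by (rule bij_betw_inv_into_right)
  have hg: "h (g a) = a" if "a \<in> A" for a
    unfolding h_def using g(2) that by (simp add: bij_betw_def)
  have "lin_map_on sc B A h" unfolding lin_map_on_def
  proof (intro conjI ballI allI)
    show "h ` B \<subseteq> A" using hA by blast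
  next
    fix u v assume "u \<in> B" "v \<in> B"
    then have "g (h u + h v) = u + v"
      using g(1) hA gh unfolding lin_map_on_def by simp
    then show "h (u + v) = h u + h v" using hg add hA \<open>u \<in> B\<close> \<open>v \<in> B\<close> by metis
  next
    fix c u assume "u \<in> B"
    then have "g (sc c (h u)) = sc c u"
      using g(1) hA gh unfolding lin_map_on_def by simp
    then show "h (sc c u) = sc c (h u)" using hg scale hA \<open>u \<in> B\<close> by metis
  qed
  then show ?thesis using h unfolding lin_iso_def by blast
qed

lemma lin_iso_image:
  assumes "lin_map_on sc A B f" and "inj_on f A" and "A' \<subseteq> A"
  shows "lin_iso sc A' (f ` A')"
proof -
  have "lin_map_on sc A' (f ` A') f" using assms(1,3) unfolding lin_map_on_def by blast
  moreover have "bij_betw f A' (f ` A')"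
    using assms(2,3) inj_on_subset by (blast intro: inj_on_imp_bij_betw)
  ultimately show ?thesis unfolding lin_iso_def by blast
qed

lemma kP_module_module: "kP_module sc V F \<Longrightarrow> module sc"
  unfolding kP_module_def vector_space_def module_def by simp

lemma kP_module_subspace: "kP_module sc V F \<Longrightarrow> module.subspace sc (V x)"
  unfolding kP_module_def by simp

lemma kP_module_zero:
  assumes "kP_module sc V F"
  shows "0 \<in> V x"
  using kP_module_subspace[OF assms]
  by (simp add: module.subspace_def[OF kP_module_module[OF assms]])

lemma kP_module_lin_map_on: "kP_module sc V F \<Longrightarrow> x \<le> y \<Longrightarrow> lin_map_on sc (V x) (V y) (F x y)"
  unfolding kP_module_def by simp

lemma kerM_subspace:
  assumes "kP_module sc V F" and "x \<le> y"
  shows "module.subspace sc (kerM V F x y)"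
proof -
  have M: "module sc" using assms(1) by (rule kP_module_module)
  have Vx: "module.subspace sc (V x)" using assms(1) by (rule kP_module_subspace)
  have F: "lin_map_on sc (V x) (V y) (F x y)" using assms by (rule kP_module_lin_map_on)
  have "F x y 0 = 0" using F kP_module_zero[OF assms(1)] by (rule lin_map_on_zero)
  moreover have "sc c 0 = 0" for c by (rule module.scale_zero_right[OF M])
  ultimately show ?thesis
    using Vx F unfolding module.subspace_def[OF M] kerM_def lin_map_on_def by auto
qed

locale pullback_nat_iso =
  fixes sc :: "'k::field \<Rightarrow> 'v::ab_group_add \<Rightarrow> 'v"
    and V :: "'p::order \<Rightarrow> 'v set"
    and F :: "'p \<Rightarrow> 'p \<Rightarrow> 'v \<Rightarrow> 'v"
    and \<phi> :: "'p \<Rightarrow> 'p \<Rightarrow> 'v \<Rightarrow> 'v"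
  assumes kP_module: "kP_module sc V F"
    and \<phi>_lin_map_on: "a < b \<Longrightarrow> lin_map_on sc (V b) (V a) (\<phi> a b)"
    and \<phi>_bij_betw: "a < b \<Longrightarrow> bij_betw (\<phi> a b) (V b) (V a)"
    and \<phi>_natural: "a < b \<Longrightarrow> c < d \<Longrightarrow> b \<le> c \<Longrightarrow> v \<in> V b \<Longrightarrow> \<phi> c d (F b d v) = F a c (\<phi> a b v)"

lemma pullback_iso_imp_nat_iso:
  assumes "kP_module sc V F" and "pullback_iso sc V F"
  obtains \<phi> where "pullback_nat_iso sc V F \<phi>"
proof -
  obtain \<phi> where iso: "\<forall>a b. a < b \<longrightarrow> lin_map_on sc (V b) (V a) (\<phi> a b) \<and> bij_betw (\<phi> a b) (V b) (V a)"
    and natural: "\<forall>a b c d. a < b \<longrightarrow> c < d \<longrightarrow> b \<le> c \<longrightarrow>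
        (\<forall>v\<in>V b. \<phi> c d (F b d v) = F a c (\<phi> a b v))"
    using assms(2) unfolding pullback_iso_def by (elim exE conjE)
  have "pullback_nat_iso sc V F \<phi>"
    by unfold_locales (use assms(1) iso natural in blast)+
  then show thesis by (rule that)
qed

context pullback_nat_iso
begin

lemma F_eq_zero_iff:
  assumes "e < p" "p \<le> c" "c < q" "v \<in> V p"
  shows "F p q v = 0 \<longleftrightarrow> F e c (\<phi> e p v) = 0"
proof -
  have zero: "0 \<in> V q" using kP_module by (rule kP_module_zero)
  have "lin_map_on sc (V p) (V q) (F p q)"
    using assms(2,3) by (intro kP_module_lin_map_on[OF kP_module]) simp
  then have "F p q v \<in> V q" using assms(4) unfolding lin_map_on_def by blast
  moreover have "inj_on (\<phi> c q) (V q)" using \<phi>_bij_betw[OF assms(3)] by (rule bij_betw_imp_inj_on)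
  ultimately have "\<phi> c q (F p q v) = \<phi> c q 0 \<longleftrightarrow> F p q v = 0"
    using zero by (simp add: inj_on_eq_iff)
  moreover have "\<phi> c q 0 = 0" using \<phi>_lin_map_on[OF assms(3)] zero by (rule lin_map_on_zero)
  ultimately show ?thesis using \<phi>_natural[OF assms(1,3,2,4)] by simp
qed

lemma kerM_eq_image:
  assumes "e < p" "p \<le> c" "c < q"
  shows "kerM V F e c = \<phi> e p ` kerM V F p q"
proof -
  have "V e = \<phi> e p ` V p" using \<phi>_bij_betw[OF assms(1)] by (simp add: bij_betw_def)
  then show ?thesis using F_eq_zero_iff[OF assms] unfolding kerM_def by auto
qed

lemma kerM_eq_of_nonminimal:
  assumes "e < a" "a < x" "a < y"
  shows "kerM V F a x = kerM V F a y"
proof -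
  have "inj_on (\<phi> e a) (V a)" using \<phi>_bij_betw[OF assms(1)] by (rule bij_betw_imp_inj_on)
  moreover have "\<phi> e a ` kerM V F a x = \<phi> e a ` kerM V F a y"
    using kerM_eq_image[of e a a x] kerM_eq_image[of e a a y] assms by simp
  ultimately show ?thesis by (simp add: inj_on_image_eq_iff kerM_def)
qed

lemma lin_iso_kerM:
  assumes "e < p" "p \<le> c" "c < q"
  shows "lin_iso sc (kerM V F p q) (kerM V F e c)"
  unfolding kerM_eq_image[OF assms]
  using \<phi>_lin_map_on[OF assms(1)] bij_betw_imp_inj_on[OF \<phi>_bij_betw[OF assms(1)]]
  by (rule lin_iso_image) (auto simp: kerM_def)

lemma lin_iso_kerM_above:
  assumes "e' < e" "e \<le> u" "u < q" "e < w"
  shows "lin_iso sc (kerM V F u q) (kerM V F e w)"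
proof (cases "e = u")
  case True
  then have "kerM V F u q = kerM V F e w"
    using kerM_eq_of_nonminimal[OF assms(1) _ assms(4)] assms(3) by simp
  then show ?thesis by (simp add: lin_iso_refl)
next
  case False
  then have "e < u" using assms(2) by simp
  have "lin_iso sc (kerM V F u q) (kerM V F e u)"
    using \<open>e < u\<close> assms(3) by (intro lin_iso_kerM) auto
  then show ?thesis using kerM_eq_of_nonminimal[OF assms(1) \<open>e < u\<close> assms(4)] by simp
qed

definition kerM_iso_above :: "'v set \<Rightarrow> 'p \<times> 'p \<Rightarrow> bool" where
  "kerM_iso_above K P \<longleftrightarrow> (\<forall>p q. (\<exists>e. e < p) \<longrightarrow> p < q \<longrightarrow> ((p, q) = P \<or> snd P \<le> p) \<longrightarrow>
     lin_iso sc K (kerM V F p q))"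

lemma lin_iso_kerM_sym:
  assumes "p < q" and "lin_iso sc (kerM V F p q) A"
  shows "lin_iso sc A (kerM V F p q)"
  using kP_module_module[OF kP_module] kerM_subspace[OF kP_module less_imp_le[OF assms(1)]] assms(2)
  by (rule lin_iso_sym)

lemma kerM_iso_above_step:
  assumes "g1_adj P Q" and "kerM_iso_above K P"
  shows "kerM_iso_above K Q"
proof -
  obtain x y x' y' where PQ: "P = (x, y)" "Q = (x', y')" by force
  have xy: "x < y" and xy': "x' < y'" and "y \<le> x' \<or> y' \<le> x"
    using assms(1) unfolding PQ g1_adj_def by auto
  then consider "y \<le> x'" | "y' \<le> x" by blast
  then show ?thesis
  proof cases
    case 1
    then show ?thesis using assms(2) xy' unfolding PQ kerM_iso_above_def by force
  next
    case 2
    have "x' < x" using xy' 2 by simp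
    then have K: "lin_iso sc K (kerM V F x y)"
      using assms(2) xy unfolding PQ kerM_iso_above_def by blast
    show ?thesis unfolding kerM_iso_above_def PQ snd_conv
    proof (intro allI impI)
      fix p q assume "\<exists>e. e < p" "p < q" "(p, q) = (x', y') \<or> y' \<le> p"
      then consider "p = x'" "q = y'" "\<exists>e. e < x'" | "y' \<le> p" by blast
      then show "lin_iso sc K (kerM V F p q)"
      proof cases
        case 1
        then obtain e where "e < x'" by blast
        then have "lin_iso sc (kerM V F x y) (kerM V F x' y')"
          using 2 xy xy' by (intro lin_iso_kerM_above) auto
        then show ?thesis using K lin_iso_trans 1 by blast
      next
        case y'p: 2
        have "lin_iso sc (kerM V F x y) (kerM V F y' y)"
          using lin_iso_kerM_above[OF xy' 2 xy] 2 xy by simp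
        moreover have "lin_iso sc (kerM V F p q) (kerM V F y' y)"
          using lin_iso_kerM_above[OF xy' y'p \<open>p < q\<close>] 2 xy by simp
        then have "lin_iso sc (kerM V F y' y) (kerM V F p q)"
          by (rule lin_iso_kerM_sym[OF \<open>p < q\<close>])
        ultimately show ?thesis using K lin_iso_trans by blast
      qed
    qed
  qed
qed

lemma lin_iso_kerM_of_rtranclp_g1_adj:
  assumes "g1_adj\<^sup>*\<^sup>* (a, b) (c, d)" and "a < b" and "e < a" and "e' < c"
  shows "lin_iso sc (kerM V F a b) (kerM V F c d)"
proof -
  have "kerM_iso_above (kerM V F a b) (a, b)"
    unfolding kerM_iso_above_def snd_conv
  proof (intro allI impI)
    fix p q assume "p < q" "(p, q) = (a, b) \<or> b \<le> p"
    then consider "(p, q) = (a, b)" | "b \<le> p" by blast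
    then show "lin_iso sc (kerM V F a b) (kerM V F p q)"
    proof cases
      case 1
      then show ?thesis by (simp add: lin_iso_refl)
    next
      case 2
      then have "lin_iso sc (kerM V F p q) (kerM V F a b)"
        using assms(2) \<open>p < q\<close> by (intro lin_iso_kerM_above[OF assms(3)]) auto
      then show ?thesis by (rule lin_iso_kerM_sym[OF \<open>p < q\<close>])
    qed
  qed
  with assms(1) have "kerM_iso_above (kerM V F a b) (c, d)"
    by (induction rule: rtranclp_induct) (blast intro: kerM_iso_above_step)+
  moreover have "c < d" using assms(1,2) by (cases rule: rtranclp.cases) (auto simp: g1_adj_def)
  ultimately show ?thesis using assms(4) unfolding kerM_iso_above_def by blast
qed

end

theorem lemma4p5:
  fixes sc :: "'k::field \<Rightarrow> 'v::ab_group_add \<Rightarrow> 'v"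
    and V :: "'p::order \<Rightarrow> 'v set"
    and F :: "'p \<Rightarrow> 'p \<Rightarrow> 'v \<Rightarrow> 'v"
    and r :: 'p
  assumes "comp_length_ge2 TYPE('p)"
    and "hasse_rooted_tree r"
    and "kP_module sc V F"
    and "pullback_iso sc V F"
  shows "(\<forall>a x y. a \<noteq> r \<longrightarrow> a < x \<longrightarrow> a < y \<longrightarrow> kerM V F a x = kerM V F a y)
    \<and> (\<forall>a b c d. same_line_component a b c d \<longrightarrow> a \<noteq> r \<longrightarrow> c \<noteq> r \<longrightarrow>
          lin_iso sc (kerM V F a b) (kerM V F c d))
    \<and> (\<forall>s. (\<forall>t. covers r t \<longleftrightarrow> t = s) \<longrightarrow>
          (\<forall>s'. s < s' \<longrightarrow> (\<exists>z. s' < z) \<longrightarrow> kerM V F r s = kerM V F r s'))"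
proof -
  obtain \<phi> where "pullback_nat_iso sc V F \<phi>"
    using assms(3,4) by (rule pullback_iso_imp_nat_iso)
  then interpret pullback_nat_iso sc V F \<phi> .
  have nonminimal: "\<exists>e. e < a" if "a \<noteq> r" for a
    using assms(2) that unfolding hasse_rooted_tree_def by blast
  show ?thesis
  proof (intro conjI allI impI)
    fix a x y assume "a \<noteq> r" "a < x" "a < y"
    then show "kerM V F a x = kerM V F a y" using nonminimal kerM_eq_of_nonminimal by blast
  next
    fix a b c d assume "same_line_component a b c d" "a \<noteq> r" "c \<noteq> r"
    then show "lin_iso sc (kerM V F a b) (kerM V F c d)"
      using nonminimal lin_iso_kerM_of_rtranclp_g1_adj unfolding same_line_component_def by blast
  next
    fix s s' assume "\<forall>t. covers r t \<longleftrightarrow> t = s" "s < s'" "\<exists>z. s' < z"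
    then obtain z where "r < s" "s < s'" "s' < z" unfolding covers_def by blast
    then show "kerM V F r s = kerM V F r s'"
      using kerM_eq_image[of r s s z] kerM_eq_image[of r s s' z] by simp
  qed
qed

end
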